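(* Let $q\in\mathbb{C}$ with $|q|<1$, $r\in\mathbb{N}$, $n\in\mathbb{Z}_{+}=\{0,1,2,\dots\}$, $x$ real with $x\neq0,-1,-2,\dots$, and let $\chi$ be a Dirichlet character with conductor $f\in\mathbb{N}$, $f$ odd. Then $$E_{n,\chi,q}^{(r)}(x)=[f]_q^n\left(\frac{[2]_q}{[2]_{q^f}}\right)^r\sum_{a_1,\dots,a_r=0}^{f-1}\left(\prod_{j=1}^r\chi(a_j)\right)(-1)^{\sum_{j=1}^r a_j}E_{n,q^f}^{(r)}\!\left(\frac{x+\sum_{j=1}^r a_j}{f}\right),$$ and $$E_{n,\chi,q}^{(r)}(x)=\frac{[2]_q^r}{(1-q)^n}\sum_{l=0}^{n}\binom{n}{l}(-q^x)^l\sum_{a_1,\dots,a_r=0}^{f-1}\frac{\left(\prod_{j=1}^r\chi(a_j)\right)(-q^l)^{\sum_{i=1}^r a_i}}{(1+q^{lf})^r}.$$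
   Context: For a complex number $q$ with $|q|<1$ and $x$ real, $[x]_q=\frac{1-q^x}{1-q}$ (so $[2]_q=1+q$). For $r\in\mathbb{N}$, the $q$-Euler polynomials of order $r$ are defined by $$[2]_q^r\sum_{m_1,\dots,m_r=0}^{\infty}(-1)^{m_1+\cdots+m_r}e^{[m_1+\cdots+m_r+x]_q t}=\sum_{n=0}^{\infty}E_{n,q}^{(r)}(x)\frac{t^n}{n!},$$ with $E_{n,q^f}^{(r)}$ the same with $q$ replaced by $q^f$. The generalized $q$-Euler polynomials of order $r$ attached to $\chi$ are defined by $$[2]_q^r\sum_{m_1,\dots,m_r=0}^{\infty}(-1)^{m_1+\cdots+m_r}\left(\prod_{j=1}^r\chi(m_j)\right)e^{[x+m_1+\cdots+m_r]_q t}=\sum_{n=0}^{\infty}E_{n,\chi,q}^{(r)}(x)\frac{t^n}{n!}.$$ *)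

theory Defs
  imports "HOL-Analysis.Analysis" "HOL-Number_Theory.Cong"
begin

text \<open>The base q is represented through a chosen logarithm L (q = exp L), so that
  q^x = exp (x L) for real x, and (q^f)^y = exp (y f L) consistently.\<close>

definition qpow :: "complex \<Rightarrow> real \<Rightarrow> complex" where
  "qpow L x = exp (complex_of_real x * L)"

definition qnum :: "complex \<Rightarrow> real \<Rightarrow> complex" where
  "qnum L x = (1 - qpow L x) / (1 - exp L)"

text \<open>q-Euler polynomials of order r; the (divergent) alternating series defining the
  t^n coefficient of the generating function is read in the Abel sense.\<close>
definition q_euler :: "complex \<Rightarrow> nat \<Rightarrow> nat \<Rightarrow> real \<Rightarrow> complex" where
  "q_euler L r n x = qnum L 2 ^ r *
     Lim (at_left (1::real))
       (\<lambda>z. infsum (\<lambda>m. (- complex_of_real z) ^ (\<Sum>j<r. m j)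
                           * qnum L (x + real (\<Sum>j<r. m j)) ^ n)
                 (PiE {..<r} (\<lambda>_. UNIV)))"

definition q_euler_chi :: "complex \<Rightarrow> nat \<Rightarrow> (nat \<Rightarrow> complex) \<Rightarrow> nat \<Rightarrow> real \<Rightarrow> complex" where
  "q_euler_chi L r chi n x = qnum L 2 ^ r *
     Lim (at_left (1::real))
       (\<lambda>z. infsum (\<lambda>m. (- complex_of_real z) ^ (\<Sum>j<r. m j) * (\<Prod>j<r. chi (m j))
                           * qnum L (x + real (\<Sum>j<r. m j)) ^ n)
                 (PiE {..<r} (\<lambda>_. UNIV)))"

definition dirichlet_char :: "nat \<Rightarrow> (nat \<Rightarrow> complex) \<Rightarrow> bool" where
  "dirichlet_char f chi \<longleftrightarrow> f > 0 \<and> chi 1 = 1 \<and>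
     (\<forall>a b. chi (a * b) = chi a * chi b) \<and>
     (\<forall>a. chi (a + f) = chi a) \<and>
     (\<forall>a. chi a \<noteq> 0 \<longleftrightarrow> coprime a f)"

text \<open>chi has conductor f: it is a primitive character modulo f, i.e. not induced by a
  character of any proper divisor modulus d of f.\<close>
definition has_conductor :: "(nat \<Rightarrow> complex) \<Rightarrow> nat \<Rightarrow> bool" where
  "has_conductor chi f \<longleftrightarrow> dirichlet_char f chi \<and>
     (\<forall>d. d dvd f \<and> d < f \<longrightarrow> (\<exists>a. coprime a f \<and> [a = 1] (mod d) \<and> chi a \<noteq> 1))"

end

theory Submission imports Defs begin

(* For 0 < z < 1 the twisted multiple series
   \<Sum>_m (-z)^|m| \<chi>(m_1)...\<chi>(m_r) [x + |m|]_q^n   (|m| = m_1 + ... + m_r)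
   converges absolutely. Expanding [x + |m|]_q^n = (1 - q)^-n \<Sum>_l C(n,l) (-q^x)^l (q^l)^|m| by the
   binomial theorem, it splits into r-th powers of the power series \<Sum>_k \<chi>(k) (-z q^l)^k, whose
   coefficients are f-periodic, so each sums to (\<Sum>_{a<f} \<chi>(a) (-z q^l)^a) / (1 - (-z q^l)^f).
   As f is odd, the denominators tend to 1 + q^(lf) \<noteq> 0 as z \<rightarrow> 1-, which yields the second formula.
   The same computation with \<chi> = 1, f = 1 and q^f in place of q evaluates every E_{n,q^f}((x + |a|)/f);
   substituting these into the first formula and exchanging the finite sums gives the second one. *)

lemma periodic_add_mult:
  fixes c :: "nat \<Rightarrow> 'a"
  assumes "\<And>k. c (k + p) = c k"
  shows "c (k + m * p) = c k"
proof (induction m)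
  case (Suc m)
  have "k + Suc m * p = (k + m * p) + p" by simp
  then show ?case using assms Suc.IH by metis
qed simp

lemma periodic_mod:
  fixes c :: "nat \<Rightarrow> 'a"
  assumes "\<And>k. c (k + p) = c k"
  shows "c k = c (k mod p)"
proof -
  have "c (k mod p + k div p * p) = c (k mod p)"
    by (rule periodic_add_mult[where c=c and p=p, OF assms])
  then show ?thesis by (simp add: mod_div_mult_eq)
qed

lemma power_ne_one_of_norm_less_one:
  fixes w :: "'a :: real_normed_div_algebra"
  assumes "norm w < 1" "k > 0"
  shows "w ^ k \<noteq> 1"
proof -
  have "norm (w ^ k) < 1" using assms by (simp add: norm_power power_less_one_iff)
  then show ?thesis by auto
qed

lemma periodic_power_series_sums:
  fixes c :: "nat \<Rightarrow> 'a :: {real_normed_field, banach}"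
  assumes w: "norm w < 1" and p: "p > 0" and per: "\<And>k. c (k + p) = c k"
  shows "summable (\<lambda>k. norm (c k * w ^ k))"
    and "(\<lambda>k. c k * w ^ k) sums ((\<Sum>a<p. c a * w ^ a) / (1 - w ^ p))"
proof -
  define B where "B = (\<Sum>a<p. norm (c a))"
  have c_bound: "norm (c k) \<le> B" for k
    unfolding B_def periodic_mod[of c p k, OF per]
    by (rule member_le_sum) (use p in auto)
  have "summable (\<lambda>k. B * norm w ^ k)"
    using w by (intro summable_mult summable_geometric) auto
  then show "summable (\<lambda>k. norm (c k * w ^ k))"
    by (rule summable_comparison_test[rotated])
       (auto simp: norm_mult norm_power intro!: mult_right_mono c_bound)
  then have sm: "summable (\<lambda>k. c k * w ^ k)" by (rule summable_norm_cancel)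
  define S where "S = (\<Sum>k. c k * w ^ k)"
  have "S = (\<Sum>k. c (k + p) * w ^ (k + p)) + (\<Sum>a<p. c a * w ^ a)"
    unfolding S_def by (rule suminf_split_initial_segment[OF sm])
  also have "(\<Sum>k. c (k + p) * w ^ (k + p)) = w ^ p * S"
    unfolding S_def using suminf_mult[OF sm, of "w ^ p"]
    by (simp add: per power_add algebra_simps)
  finally have "S * (1 - w ^ p) = (\<Sum>a<p. c a * w ^ a)" by (simp add: algebra_simps)
  moreover have "w ^ p \<noteq> 1" using power_ne_one_of_norm_less_one[OF w p] .
  ultimately have "S = (\<Sum>a<p. c a * w ^ a) / (1 - w ^ p)" by (simp add: field_simps)
  then show "(\<lambda>k. c k * w ^ k) sums ((\<Sum>a<p. c a * w ^ a) / (1 - w ^ p))"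
    using sm S_def summable_sums by metis
qed

lemma has_sum_PiE_prod_power:
  fixes g :: "nat \<Rightarrow> 'a :: {real_normed_field, banach, second_countable_topology}"
  assumes "finite J" "summable (\<lambda>k. norm (g k))" "g sums G"
  shows "((\<lambda>m. \<Prod>j\<in>J. g (m j)) has_sum (G ^ card J)) (PiE J (\<lambda>_. UNIV))"
proof -
  have g_has_sum: "(g has_sum G) UNIV"
    by (rule norm_summable_imp_has_sum[OF assms(2,3)])
  have g_abs: "Infinite_Sum.abs_summable_on g UNIV"
    using norm_summable_imp_summable_on[of "\<lambda>k. norm (g k)"] assms(2) by simp
  then have "Infinite_Sum.abs_summable_on (\<lambda>m. \<Prod>j\<in>J. g (m j)) (PiE J (\<lambda>_. UNIV))"
    using abs_summable_on_prod_PiE[OF assms(1), of "\<lambda>_. UNIV" "\<lambda>_. g"]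
    unfolding abs_summable_equivalent by simp
  then have "(\<lambda>m. \<Prod>j\<in>J. g (m j)) summable_on PiE J (\<lambda>_. UNIV)"
    by (rule abs_summable_summable)
  moreover have "infsum (\<lambda>m. \<Prod>j\<in>J. g (m j)) (PiE J (\<lambda>_. UNIV)) = G ^ card J"
    using infsum_prod_PiE_abs[OF assms(1), of "\<lambda>_. g" "\<lambda>_. UNIV"] g_abs infsumI[OF g_has_sum]
    by simp
  ultimately show ?thesis using has_sum_infsum by metis
qed

lemma has_sum_sum:
  fixes F :: "'i \<Rightarrow> 'a \<Rightarrow> 'b :: topological_comm_monoid_add"
  assumes "finite I" "\<And>i. i \<in> I \<Longrightarrow> (F i has_sum s i) A"
  shows "((\<lambda>m. \<Sum>i\<in>I. F i m) has_sum (\<Sum>i\<in>I. s i)) A"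
  using assms by (induction I rule: finite_induct) (auto intro: has_sum_add)

lemma power_sum_eq_sum_PiE:
  fixes h :: "'b \<Rightarrow> 'a :: comm_semiring_1"
  assumes "finite A"
  shows "(\<Sum>a\<in>A. h a) ^ r = (\<Sum>g\<in>PiE {..<r} (\<lambda>_. A). \<Prod>j<r. h (g j))"
  using prod_sum_PiE[where A="{..<r}" and B="\<lambda>_. A" and f="\<lambda>_. h"] assms by simp

lemma qpow_add_of_nat: "qpow L (x + real s) = qpow L x * exp L ^ s"
  unfolding qpow_def by (simp add: distrib_right exp_add exp_of_nat_mult)

lemma qpow_of_nat: "qpow L (real k) = exp L ^ k"
  unfolding qpow_def by (simp add: exp_of_nat_mult)

lemma qpow_scale: "qpow (of_nat f * L) y = qpow L (real f * y)"
  unfolding qpow_def by (simp add: mult_ac)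

lemma qnum_of_nat: "qnum L (real k) = (1 - exp L ^ k) / (1 - exp L)"
  unfolding qnum_def qpow_of_nat ..

lemma qnum_shift_power_binomial:
  "qnum L (x + real s) ^ n =
     (\<Sum>l=0..n. of_nat (n choose l) * (- qpow L x) ^ l * (exp L ^ l) ^ s) / (1 - exp L) ^ n"
proof -
  have "(1 - qpow L x * exp L ^ s) ^ n = (\<Sum>l\<le>n. of_nat (n choose l) * (- qpow L x * exp L ^ s) ^ l)"
    using binomial_ring[of "- qpow L x * exp L ^ s" 1 n] by simp
  also have "\<dots> = (\<Sum>l=0..n. of_nat (n choose l) * (- qpow L x) ^ l * (exp L ^ l) ^ s)"
  proof -
    have "(- qpow L x * exp L ^ s) ^ l = (- qpow L x) ^ l * (exp L ^ l) ^ s" for l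
      by (metis mult.commute power_mult power_mult_distrib)
    then show ?thesis by (simp add: atLeast0AtMost mult.assoc)
  qed
  finally show ?thesis
    unfolding qnum_def qpow_add_of_nat by (simp add: power_divide)
qed

definition abel_twisted_series ::
    "complex \<Rightarrow> nat \<Rightarrow> (nat \<Rightarrow> complex) \<Rightarrow> nat \<Rightarrow> real \<Rightarrow> complex" where
  "abel_twisted_series L r c n x = Lim (at_left (1::real))
     (\<lambda>z. infsum (\<lambda>m. (- complex_of_real z) ^ (\<Sum>j<r. m j) * (\<Prod>j<r. c (m j))
                       * qnum L (x + real (\<Sum>j<r. m j)) ^ n)
               (PiE {..<r} (\<lambda>_. UNIV)))"

lemma q_euler_chi_eq_abel_twisted_series:
  "q_euler_chi L r chi n x = qnum L 2 ^ r * abel_twisted_series L r chi n x"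
  unfolding q_euler_chi_def abel_twisted_series_def ..

lemma q_euler_eq_abel_twisted_series:
  "q_euler L r n x = qnum L 2 ^ r * abel_twisted_series L r (\<lambda>_. 1) n x"
  unfolding q_euler_def abel_twisted_series_def by simp

lemma twisted_term_expansion:
  "(- complex_of_real z) ^ (\<Sum>j<r. m j) * (\<Prod>j<r. c (m j)) * qnum L (x + real (\<Sum>j<r. m j)) ^ n
   = (\<Sum>l=0..n. of_nat (n choose l) * (- qpow L x) ^ l / (1 - exp L) ^ n *
        (\<Prod>j<r. c (m j) * (- complex_of_real z * exp L ^ l) ^ m j))"
proof -
  have prod_eq: "(\<Prod>j<r. c (m j) * w ^ m j) = (\<Prod>j<r. c (m j)) * w ^ (\<Sum>j<r. m j)" for w
    by (simp add: prod.distrib power_sum)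
  show ?thesis
    unfolding qnum_shift_power_binomial prod_eq unfolding power_mult_distrib
    by (simp add: sum_distrib_left sum_divide_distrib mult_ac)
qed

lemma twisted_series_has_sum:
  assumes Q: "norm (exp L) < 1" and z: "\<bar>z\<bar> < 1"
    and p: "p > 0" and per: "\<And>k. c (k + p) = c k"
  shows "((\<lambda>m. (- complex_of_real z) ^ (\<Sum>j<r. m j) * (\<Prod>j<r. c (m j))
                 * qnum L (x + real (\<Sum>j<r. m j)) ^ n)
         has_sum (\<Sum>l=0..n. of_nat (n choose l) * (- qpow L x) ^ l / (1 - exp L) ^ n *
           ((\<Sum>a<p. c a * (- complex_of_real z * exp L ^ l) ^ a)
             / (1 - (- complex_of_real z * exp L ^ l) ^ p)) ^ r))
        (PiE {..<r} (\<lambda>_. UNIV))"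
proof -
  have "((\<lambda>m. \<Prod>j<r. c (m j) * (- complex_of_real z * exp L ^ l) ^ m j)
         has_sum ((\<Sum>a<p. c a * (- complex_of_real z * exp L ^ l) ^ a)
                  / (1 - (- complex_of_real z * exp L ^ l) ^ p)) ^ r) (PiE {..<r} (\<lambda>_. UNIV))" for l
  proof -
    have "norm (exp L ^ l) \<le> 1"
      using Q by (simp add: norm_power power_le_one)
    then have "norm (- complex_of_real z * exp L ^ l) \<le> \<bar>z\<bar>"
      by (simp add: norm_mult mult_left_le)
    then have "norm (- complex_of_real z * exp L ^ l) < 1" using z by linarith
    from periodic_power_series_sums[where c=c and p=p, OF this p per]
    show ?thesis using has_sum_PiE_prod_power[of "{..<r}"] by simp
  qed
  then show ?thesis
    unfolding twisted_term_expansion by (intro has_sum_sum has_sum_cmult_right) auto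
qed

lemma abel_twisted_series_closed_form:
  assumes Q: "norm (exp L) < 1" and p: "p > 0" "odd p" and per: "\<And>k. c (k + p) = c k"
  shows "abel_twisted_series L r c n x =
    (\<Sum>l=0..n. of_nat (n choose l) * (- qpow L x) ^ l / (1 - exp L) ^ n *
        ((\<Sum>a<p. c a * (- (exp L ^ l)) ^ a) / (1 + exp L ^ (l * p))) ^ r)"
proof -
  define G where "G = (\<lambda>z::real. \<Sum>l=0..n. of_nat (n choose l) * (- qpow L x) ^ l / (1 - exp L) ^ n *
           ((\<Sum>a<p. c a * (- complex_of_real z * exp L ^ l) ^ a)
             / (1 - (- complex_of_real z * exp L ^ l) ^ p)) ^ r)"
  \<comment> \<open>At \<open>l = 0\<close> the denominator is \<open>1 - (-1)^p\<close>: this is where oddness of \<open>p\<close> is needed.\<close>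
  have denom_nonzero: "1 - (- complex_of_real 1 * exp L ^ l) ^ p \<noteq> 0" for l
  proof (cases "l = 0")
    case False
    then have "norm ((exp L ^ l) ^ p) < 1" using Q p by (simp add: norm_power power_less_one_iff)
    then have "(exp L ^ l) ^ p \<noteq> - 1" by auto
    then show ?thesis using p(2) by (simp add: power_minus_odd add_eq_0_iff)
  qed (use p(2) in simp)
  have "eventually (\<lambda>z. z \<in> {0<..<1}) (at_left (1::real))"
    by (rule eventually_at_left_real) simp
  then have "eventually (\<lambda>z. infsum (\<lambda>m. (- complex_of_real z) ^ (\<Sum>j<r. m j) * (\<Prod>j<r. c (m j))
                       * qnum L (x + real (\<Sum>j<r. m j)) ^ n) (PiE {..<r} (\<lambda>_. UNIV)) = G z)
               (at_left (1::real))"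
  proof eventually_elim
    case (elim z)
    then show ?case
      unfolding G_def by (intro infsumI twisted_series_has_sum[where c=c and p=p, OF Q _ p(1) per]) auto
  qed
  moreover have "(G \<longlongrightarrow> G 1) (at_left 1)"
    unfolding G_def by (intro tendsto_intros) (use denom_nonzero in auto)
  ultimately have "abel_twisted_series L r c n x = G 1"
    unfolding abel_twisted_series_def by (intro tendsto_Lim) (auto simp: tendsto_cong)
  also have "G 1 = (\<Sum>l=0..n. of_nat (n choose l) * (- qpow L x) ^ l / (1 - exp L) ^ n *
        ((\<Sum>a<p. c a * (- (exp L ^ l)) ^ a) / (1 + exp L ^ (l * p))) ^ r)"
    unfolding G_def using p(2) by (simp add: power_minus_odd power_mult)
  finally show ?thesis .
qed

lemma q_euler_chi_closed_form:
  assumes "norm (exp L) < 1" "f > 0" "odd f" "\<And>k. chi (k + f) = chi k"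
  shows "q_euler_chi L r chi n x = qnum L 2 ^ r / (1 - exp L) ^ n *
           (\<Sum>l=0..n. of_nat (n choose l) * (- qpow L x) ^ l *
              (\<Sum>a\<in>PiE {..<r} (\<lambda>_. {..<f}).
                 (\<Prod>j<r. chi (a j)) * (- (exp L ^ l)) ^ (\<Sum>i<r. a i) / (1 + exp L ^ (l * f)) ^ r))"
proof -
  have "((\<Sum>a<f. chi a * (- (exp L ^ l)) ^ a) / (1 + exp L ^ (l * f))) ^ r
      = (\<Sum>a\<in>PiE {..<r} (\<lambda>_. {..<f}).
           (\<Prod>j<r. chi (a j)) * (- (exp L ^ l)) ^ (\<Sum>i<r. a i) / (1 + exp L ^ (l * f)) ^ r)" for l
    unfolding sum_divide_distrib power_sum_eq_sum_PiE[OF finite_lessThan]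
    by (intro sum.cong refl) (simp add: prod_dividef prod.distrib power_sum)
  then show ?thesis
    unfolding q_euler_chi_eq_abel_twisted_series abel_twisted_series_closed_form[where c=chi and p=f, OF assms]
    by (simp add: sum_distrib_left)
qed

lemma q_euler_closed_form:
  assumes "norm (exp L) < 1"
  shows "q_euler L r n y = qnum L 2 ^ r / (1 - exp L) ^ n *
           (\<Sum>l=0..n. of_nat (n choose l) * (- qpow L y) ^ l / (1 + exp L ^ l) ^ r)"
  using abel_twisted_series_closed_form[where c="\<lambda>_. 1" and p=1, OF assms zero_less_one odd_one]
  by (simp add: q_euler_eq_abel_twisted_series sum_distrib_left power_divide)

lemma q_euler_scaled_shift:
  assumes "norm (exp L) < 1" "f > 0"
  shows "q_euler (of_nat f * L) r n ((x + real s) / real f) =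
           qnum (of_nat f * L) 2 ^ r / (1 - exp L ^ f) ^ n *
           (\<Sum>l=0..n. of_nat (n choose l) * (- qpow L x) ^ l * (exp L ^ l) ^ s / (1 + exp L ^ (l * f)) ^ r)"
proof -
  define L' where "L' = of_nat f * L"
  have exp_L': "exp L' = exp L ^ f" unfolding L'_def by (rule exp_of_nat_mult)
  have "norm (exp L') < 1"
    using assms by (simp add: exp_L' norm_power power_less_one_iff)
  moreover have qpow_L': "qpow L' ((x + real s) / real f) = qpow L x * exp L ^ s"
    unfolding L'_def using assms(2) by (simp add: qpow_scale qpow_add_of_nat)
  moreover have "of_nat (n choose l) * (- (qpow L x * exp L ^ s)) ^ l / (1 + (exp L ^ f) ^ l) ^ r
      = of_nat (n choose l) * (- qpow L x) ^ l * (exp L ^ l) ^ s / (1 + exp L ^ (l * f)) ^ r" for l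
  proof -
    have "(- (qpow L x * exp L ^ s)) ^ l = (- qpow L x) ^ l * (exp L ^ l) ^ s"
      by (metis minus_mult_left mult.commute power_mult power_mult_distrib)
    moreover have "(exp L ^ f) ^ l = exp L ^ (l * f)"
      by (metis mult.commute power_mult)
    ultimately show ?thesis by (simp add: mult.assoc)
  qed
  ultimately show ?thesis
    using q_euler_closed_form[of L' r n "(x + real s) / real f"]
    unfolding L'_def[symmetric] qpow_L' exp_L' by simp
qed

lemma q_euler_distribution:
  fixes chi :: "nat \<Rightarrow> complex"
  assumes Q: "norm (exp L) < 1" and f: "f > 0"
  shows "qnum L (real f) ^ n * (qnum L 2 / qnum (of_nat f * L) 2) ^ r *
           (\<Sum>a\<in>PiE {..<r} (\<lambda>_. {..<f}).
              (\<Prod>j<r. chi (a j)) * (-1) ^ (\<Sum>j<r. a j) *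
              q_euler (of_nat f * L) r n ((x + real (\<Sum>j<r. a j)) / real f))
       = qnum L 2 ^ r / (1 - exp L) ^ n *
           (\<Sum>l=0..n. of_nat (n choose l) * (- qpow L x) ^ l *
              (\<Sum>a\<in>PiE {..<r} (\<lambda>_. {..<f}).
                 (\<Prod>j<r. chi (a j)) * (- (exp L ^ l)) ^ (\<Sum>i<r. a i) / (1 + exp L ^ (l * f)) ^ r))"
proof -
  define C where "C = qnum (of_nat f * L) 2 ^ r / (1 - exp L ^ f) ^ n"
  define Y where "Y = (\<lambda>a l. of_nat (n choose l) * (- qpow L x) ^ l *
    ((\<Prod>j<r. chi (a j)) * (- (exp L ^ l)) ^ (\<Sum>i<r. a i) / (1 + exp L ^ (l * f)) ^ r))"
  have summand: "(\<Prod>j<r. chi (a j)) * (-1) ^ (\<Sum>j<r. a j) *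
      q_euler (of_nat f * L) r n ((x + real (\<Sum>j<r. a j)) / real f) = C * (\<Sum>l=0..n. Y a l)" for a
  proof -
    define P where "P = (\<Prod>j<r. chi (a j))"
    define s where "s = (\<Sum>j<r. a j)"
    have Y_eq: "P * (-1) ^ s * (of_nat (n choose l) * (- qpow L x) ^ l * (exp L ^ l) ^ s
        / (1 + exp L ^ (l * f)) ^ r) = Y a l" for l
    proof -
      have "(- (exp L ^ l)) ^ s = (-1) ^ s * (exp L ^ l) ^ s" by (rule power_minus)
      then show ?thesis unfolding Y_def P_def[symmetric] s_def[symmetric] by (simp add: mult_ac divide_inverse)
    qed
    have "P * (-1) ^ s * q_euler (of_nat f * L) r n ((x + real s) / real f)
        = C * (\<Sum>l=0..n. P * (-1) ^ s * (of_nat (n choose l) * (- qpow L x) ^ l * (exp L ^ l) ^ s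
            / (1 + exp L ^ (l * f)) ^ r))"
      unfolding q_euler_scaled_shift[OF Q f] C_def[symmetric] by (simp only: sum_distrib_left mult.left_commute)
    also have "\<dots> = C * (\<Sum>l=0..n. Y a l)" by (simp only: Y_eq)
    finally show ?thesis by (simp only: P_def s_def)
  qed
  have "1 - exp L \<noteq> 0" "1 - exp L ^ f \<noteq> 0" "1 - (exp L ^ f) ^ 2 \<noteq> 0"
    using power_ne_one_of_norm_less_one[OF Q] f by (auto simp flip: power_mult)
  moreover from this have "qnum (of_nat f * L) 2 \<noteq> 0"
    using qnum_of_nat[of "of_nat f * L" 2] by (simp add: exp_of_nat_mult)
  ultimately have const: "qnum L (real f) ^ n * (qnum L 2 / qnum (of_nat f * L) 2) ^ r * C
      = qnum L 2 ^ r / (1 - exp L) ^ n"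
    unfolding C_def qnum_of_nat[of L f] by (simp add: power_divide field_simps)
  have swap: "(\<Sum>a\<in>PiE {..<r} (\<lambda>_. {..<f}). \<Sum>l=0..n. Y a l)
      = (\<Sum>l=0..n. of_nat (n choose l) * (- qpow L x) ^ l *
           (\<Sum>a\<in>PiE {..<r} (\<lambda>_. {..<f}).
              (\<Prod>j<r. chi (a j)) * (- (exp L ^ l)) ^ (\<Sum>i<r. a i) / (1 + exp L ^ (l * f)) ^ r))"
    unfolding Y_def by (subst sum.swap) (simp only: sum_distrib_left)
  have "(\<Sum>a\<in>PiE {..<r} (\<lambda>_. {..<f}). C * (\<Sum>l=0..n. Y a l))
      = C * (\<Sum>l=0..n. of_nat (n choose l) * (- qpow L x) ^ l *
           (\<Sum>a\<in>PiE {..<r} (\<lambda>_. {..<f}).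
              (\<Prod>j<r. chi (a j)) * (- (exp L ^ l)) ^ (\<Sum>i<r. a i) / (1 + exp L ^ (l * f)) ^ r))"
    unfolding swap[symmetric] by (simp only: sum_distrib_left)
  then show ?thesis
    unfolding summand by (simp only: mult.assoc[symmetric] const)
qed

theorem theorem5:
  fixes q :: complex and r n f :: nat and x :: real and chi :: "nat \<Rightarrow> complex"
  assumes "norm q < 1" and "q \<noteq> 0" and "r \<ge> 1"
    and "\<forall>k::nat. x \<noteq> - real k"
    and "has_conductor chi f" and "odd f"
  shows "q_euler_chi (Ln q) r chi n x =
           qnum (Ln q) (real f) ^ n * (qnum (Ln q) 2 / qnum (of_nat f * Ln q) 2) ^ r *
           (\<Sum>a\<in>PiE {..<r} (\<lambda>_. {..<f}).
              (\<Prod>j<r. chi (a j)) * (-1) ^ (\<Sum>j<r. a j) *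
              q_euler (of_nat f * Ln q) r n ((x + real (\<Sum>j<r. a j)) / real f))
       \<and> q_euler_chi (Ln q) r chi n x =
           qnum (Ln q) 2 ^ r / (1 - q) ^ n *
           (\<Sum>l=0..n. of_nat (n choose l) * (- qpow (Ln q) x) ^ l *
              (\<Sum>a\<in>PiE {..<r} (\<lambda>_. {..<f}).
                 (\<Prod>j<r. chi (a j)) * (- (q ^ l)) ^ (\<Sum>i<r. a i)
                 / (1 + q ^ (l * f)) ^ r))"
proof -
  have exp_Ln: "exp (Ln q) = q" using assms(2) by simp
  have Q: "norm (exp (Ln q)) < 1" using assms(1) exp_Ln by simp
  from assms(5) have f: "f > 0" and per: "\<And>k. chi (k + f) = chi k"
    unfolding has_conductor_def dirichlet_char_def by auto
  show ?thesis
    unfolding q_euler_chi_closed_form[where chi=chi, OF Q f assms(6) per]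
      q_euler_distribution[where chi=chi, OF Q f] exp_Ln
    by simp
qed

end
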